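(* Let $Q_1,Q_1',Q_2,Q_2'$ be finite quandles with $Q_1\approx Q_1'$ and $Q_2\approx Q_2'$. Then $Q_1\times Q_2\approx Q_1'\times Q_2'$.
   Context: A quandle is a set $X$ with a binary operation $*$ such that $a*a=a$; for all $b,c$ there is a unique $a$ with $a*b=c$; and $(a*b)*c=(a*c)*(b*c)$. The product quandle $Q_1\times Q_2$ has componentwise operation $(a,b)*(a',b')=(a*a',b*b')$. $\mathrm{Col}_Q(K)$ is the number of colorings of an oriented knot $K$ by $Q$ (colorings being maps from arcs of a diagram to $Q$ satisfying: over-arc colored $y$, incoming under-arc colored $x$ (fixed orientation convention) implies the other under-arc is colored $x*y$; equivalently homomorphisms from the fundamental quandle of $K$ to $Q$). For quandles $Q,Q'$, write $Q\approx Q'$ if $\mathrm{Col}_Q(K)=\mathrm{Col}_{Q'}(K)$ for every knot $K$. *)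

theory Defs
  imports Main
begin

definition quandle :: "'a set \<Rightarrow> ('a \<Rightarrow> 'a \<Rightarrow> 'a) \<Rightarrow> bool" where
  "quandle X m \<longleftrightarrow>
     (\<forall>a\<in>X. \<forall>b\<in>X. m a b \<in> X) \<and>
     (\<forall>a\<in>X. m a a = a) \<and>
     (\<forall>b\<in>X. \<forall>c\<in>X. \<exists>!a. a \<in> X \<and> m a b = c) \<and>
     (\<forall>a\<in>X. \<forall>b\<in>X. \<forall>c\<in>X. m (m a b) c = m (m a c) (m b c))"

definition prod_op :: "('a \<Rightarrow> 'a \<Rightarrow> 'a) \<Rightarrow> ('b \<Rightarrow> 'b \<Rightarrow> 'b) \<Rightarrow>
    ('a \<times> 'b) \<Rightarrow> ('a \<times> 'b) \<Rightarrow> ('a \<times> 'b)" where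
  "prod_op m m' p q = (m (fst p) (fst q), m' (snd p) (snd q))"

text \<open>Knots are represented as closures of braids (Alexander's theorem).
  A braid word on n strands is a list of crossings (i, pos): the generator
  sigma_i (pos = True) or its inverse (pos = False), crossing strands i and i+1
  (0-based positions).\<close>

definition tr :: "nat \<Rightarrow> nat \<Rightarrow> nat \<Rightarrow> nat" where
  "tr i j x = (if x = i then j else if x = j then i else x)"

definition braid_perm :: "(nat \<times> bool) list \<Rightarrow> nat \<Rightarrow> nat" where
  "braid_perm w = foldr (\<lambda>c p. p \<circ> tr (fst c) (Suc (fst c))) w id"

text \<open>The closure of the braid word w on n strands is a knot (one component).\<close>
definition knot_braid :: "nat \<Rightarrow> (nat \<times> bool) list \<Rightarrow> bool" where
  "knot_braid n w \<longleftrightarrow> 1 \<le> n \<and> (\<forall>c\<in>set w. Suc (fst c) < n) \<and>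
     (\<forall>s<n. \<exists>t. (braid_perm w ^^ t) 0 = s)"

text \<open>Colorings of the closed braid diagram: c j s is the color of strand
  position s at level j (between crossing j-1 and crossing j); level length w
  is identified with level 0 by the closure.  Arcs of the diagram correspond
  bijectively to such level data.\<close>
definition colorings :: "'a set \<Rightarrow> ('a \<Rightarrow> 'a \<Rightarrow> 'a) \<Rightarrow> nat \<Rightarrow> (nat \<times> bool) list
    \<Rightarrow> (nat \<Rightarrow> nat \<Rightarrow> 'a) set" where
  "colorings X m n w = {c.
     (\<forall>j s. j \<le> length w \<and> s < n \<longrightarrow> c j s \<in> X) \<and>
     (\<forall>j s. \<not> (j \<le> length w \<and> s < n) \<longrightarrow> c j s = undefined) \<and>
     (\<forall>s<n. c (length w) s = c 0 s) \<and>
     (\<forall>j<length w. let i = fst (w ! j) in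
        (\<forall>s<n. s \<noteq> i \<and> s \<noteq> Suc i \<longrightarrow> c (Suc j) s = c j s) \<and>
        (if snd (w ! j)
         then c (Suc j) i = c j (Suc i) \<and> c (Suc j) (Suc i) = m (c j i) (c j (Suc i))
         else c j i = c (Suc j) (Suc i) \<and> c j (Suc i) = m (c (Suc j) i) (c (Suc j) (Suc i))))}"

definition Col :: "'a set \<Rightarrow> ('a \<Rightarrow> 'a \<Rightarrow> 'a) \<Rightarrow> nat \<Rightarrow> (nat \<times> bool) list \<Rightarrow> nat" where
  "Col X m n w = card (colorings X m n w)"

definition col_equiv :: "'a set \<Rightarrow> ('a \<Rightarrow> 'a \<Rightarrow> 'a) \<Rightarrow> 'b set \<Rightarrow> ('b \<Rightarrow> 'b \<Rightarrow> 'b) \<Rightarrow> bool" where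
  "col_equiv X m Y m' \<longleftrightarrow> (\<forall>n w. knot_braid n w \<longrightarrow> Col X m n w = Col Y m' n w)"

end

theory Submission
  imports Defs
begin

text \<open>A coloring by a product quandle is exactly a pair of colorings by the factors, since the
  crossing relations are componentwise. Hence the coloring numbers multiply,
  Col (Q1 \<times> Q2) K = Col Q1 K * Col Q2 K, and coloring equivalence is preserved by products.\<close>

text \<open>Colorings are undefined off the diagram, so splitting and pairing must be guarded:
  fst undefined need not be undefined.\<close>

definition coloring_fst :: "nat \<Rightarrow> nat \<Rightarrow> (nat \<Rightarrow> nat \<Rightarrow> 'a \<times> 'b) \<Rightarrow> nat \<Rightarrow> nat \<Rightarrow> 'a" where
  "coloring_fst L n c = (\<lambda>j s. if j \<le> L \<and> s < n then fst (c j s) else undefined)"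

definition coloring_snd :: "nat \<Rightarrow> nat \<Rightarrow> (nat \<Rightarrow> nat \<Rightarrow> 'a \<times> 'b) \<Rightarrow> nat \<Rightarrow> nat \<Rightarrow> 'b" where
  "coloring_snd L n c = (\<lambda>j s. if j \<le> L \<and> s < n then snd (c j s) else undefined)"

definition coloring_pair ::
    "nat \<Rightarrow> nat \<Rightarrow> (nat \<Rightarrow> nat \<Rightarrow> 'a) \<Rightarrow> (nat \<Rightarrow> nat \<Rightarrow> 'b) \<Rightarrow> nat \<Rightarrow> nat \<Rightarrow> 'a \<times> 'b" where
  "coloring_pair L n c1 c2 = (\<lambda>j s. if j \<le> L \<and> s < n then (c1 j s, c2 j s) else undefined)"

lemma crossing_strands_less:
  assumes "\<forall>x\<in>set w. Suc (fst x) < n" and "j < length w"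
  shows "fst (w ! j) < n" and "Suc (fst (w ! j)) < n"
  using assms nth_mem Suc_lessD by blast+

lemma coloring_fst_in_colorings:
  assumes "\<forall>x\<in>set w. Suc (fst x) < n" and "c \<in> colorings (X \<times> Y) (prod_op m m') n w"
  shows "coloring_fst (length w) n c \<in> colorings X m n w"
  using assms(2) crossing_strands_less[OF assms(1)]
  unfolding colorings_def coloring_fst_def prod_op_def Let_def
  by (simp add: mem_Times_iff)

lemma coloring_snd_in_colorings:
  assumes "\<forall>x\<in>set w. Suc (fst x) < n" and "c \<in> colorings (X \<times> Y) (prod_op m m') n w"
  shows "coloring_snd (length w) n c \<in> colorings Y m' n w"
  using assms(2) crossing_strands_less[OF assms(1)]
  unfolding colorings_def coloring_snd_def prod_op_def Let_def
  by (simp add: mem_Times_iff)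

lemma coloring_pair_in_colorings:
  assumes "\<forall>x\<in>set w. Suc (fst x) < n"
    and "c1 \<in> colorings X m n w" and "c2 \<in> colorings Y m' n w"
  shows "coloring_pair (length w) n c1 c2 \<in> colorings (X \<times> Y) (prod_op m m') n w"
  using assms(2,3) crossing_strands_less[OF assms(1)]
  unfolding colorings_def coloring_pair_def prod_op_def Let_def
  by (auto split: if_splits)

lemma coloring_pair_fst_snd:
  assumes "c \<in> colorings (X \<times> Y) (prod_op m m') n w"
  shows "coloring_pair (length w) n (coloring_fst (length w) n c) (coloring_snd (length w) n c) = c"
  using assms
  unfolding colorings_def coloring_pair_def coloring_fst_def coloring_snd_def
  by (auto simp: fun_eq_iff)

lemma coloring_fst_snd_pair:
  assumes "c1 \<in> colorings X m n w" and "c2 \<in> colorings Y m' n w"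
  shows "coloring_fst (length w) n (coloring_pair (length w) n c1 c2) = c1"
    and "coloring_snd (length w) n (coloring_pair (length w) n c1 c2) = c2"
  using assms
  unfolding colorings_def coloring_pair_def coloring_fst_def coloring_snd_def
  by (auto simp: fun_eq_iff)

lemma bij_betw_colorings_prod:
  assumes "\<forall>x\<in>set w. Suc (fst x) < n"
  shows "bij_betw (\<lambda>c. (coloring_fst (length w) n c, coloring_snd (length w) n c))
           (colorings (X \<times> Y) (prod_op m m') n w) (colorings X m n w \<times> colorings Y m' n w)"
  by (rule bij_betw_byWitness[where f' = "\<lambda>(c1, c2). coloring_pair (length w) n c1 c2"])
    (auto simp: coloring_pair_fst_snd coloring_fst_snd_pair coloring_fst_in_colorings[OF assms]
      coloring_snd_in_colorings[OF assms] coloring_pair_in_colorings[OF assms])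

lemma Col_prod:
  assumes "\<forall>x\<in>set w. Suc (fst x) < n"
  shows "Col (X \<times> Y) (prod_op m m') n w = Col X m n w * Col Y m' n w"
  using bij_betw_same_card[OF bij_betw_colorings_prod[OF assms]]
  by (simp add: Col_def card_cartesian_product)

theorem lemma5p1:
  fixes X1 :: "'a set" and m1 :: "'a \<Rightarrow> 'a \<Rightarrow> 'a"
    and X1' :: "'b set" and m1' :: "'b \<Rightarrow> 'b \<Rightarrow> 'b"
    and X2 :: "'c set" and m2 :: "'c \<Rightarrow> 'c \<Rightarrow> 'c"
    and X2' :: "'d set" and m2' :: "'d \<Rightarrow> 'd \<Rightarrow> 'd"
  assumes "quandle X1 m1" "finite X1"
    and "quandle X1' m1'" "finite X1'"
    and "quandle X2 m2" "finite X2"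
    and "quandle X2' m2'" "finite X2'"
    and "col_equiv X1 m1 X1' m1'"
    and "col_equiv X2 m2 X2' m2'"
  shows "col_equiv (X1 \<times> X2) (prod_op m1 m2) (X1' \<times> X2') (prod_op m1' m2')"
  using assms(9,10) unfolding col_equiv_def knot_braid_def
  by (auto simp: Col_prod)

end
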